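(* Let $m\neq0$, $A\in\mathbb{C}^{2\times2}$, and let $z$ be an eigenvalue of $D_A$. Then $z$ has geometric multiplicity one, except when $A=\begin{pmatrix}\alpha&0\\0&-4/\alpha\end{pmatrix}$ for some $\alpha\in\mathbb{C}\setminus\{0\}$; in this exceptional case the geometric multiplicity of $z$ equals $2$ and $D_A$ has no other eigenvalues.
   Context: Let $\sigma_1=\begin{pmatrix}0&1\\1&0\end{pmatrix}$, $\sigma_3=\begin{pmatrix}1&0\\0&-1\end{pmatrix}$, $m\in\mathbb{R}$. Identify $L^2(\mathbb{R};\mathbb{C}^2)=L^2(\mathbb{R}_-;\mathbb{C}^2)\oplus L^2(\mathbb{R}_+;\mathbb{C}^2)$; for $\psi=\psi_-\oplus\psi_+\in H^1(\mathbb{R}_-;\mathbb{C}^2)\oplus H^1(\mathbb{R}_+;\mathbb{C}^2)$, $\psi(0_\pm)$ are the one-sided traces at $0$. Let $\mathscr{D}=-i\sigma_1\frac{d}{dx}+m\sigma_3$, and let $D_A$ be the operator with domain $\{\psi\in H^1(\mathbb{R}_-;\mathbb{C}^2)\oplus H^1(\mathbb{R}_+;\mathbb{C}^2) : (2i\sigma_1-A)\psi(0_+)=(2i\sigma_1+A)\psi(0_-)\}$ acting as $D_A\psi=\mathscr{D}\psi_-\oplus\mathscr{D}\psi_+$. *)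

theory Defs
  imports "HOL-Analysis.Analysis" "HOL-Library.Function_Algebras"
begin

definition sigma1 :: "complex^2^2" where
  "sigma1 = (\<chi> i j. if i = j then 0 else 1)"

definition sigma3 :: "complex^2^2" where
  "sigma3 = (\<chi> i j. if i = j then (if i = 1 then 1 else -1) else 0)"

definition L2_on :: "real set \<Rightarrow> (real \<Rightarrow> complex^2) \<Rightarrow> bool" where
  "L2_on S f \<longleftrightarrow>
     (\<lambda>x. indicator S x *\<^sub>R f x) \<in> borel_measurable lborel \<and>
     set_integrable lborel S (\<lambda>x. (norm (f x))\<^sup>2)"

text \<open>f (restricted to [0,oo)) is the absolutely continuous representative of an element
  of H^1(R_+; C^2) with weak derivative g; f 0 is the one-sided trace psi(0+).\<close>

definition H1_pos :: "(real \<Rightarrow> complex^2) \<Rightarrow> (real \<Rightarrow> complex^2) \<Rightarrow> bool" where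
  "H1_pos f g \<longleftrightarrow> L2_on {0<..} f \<and> L2_on {0<..} g \<and>
     (\<forall>x\<ge>0. (g has_integral (f x - f 0)) {0..x})"

text \<open>Same on (-oo,0]; f 0 is the one-sided trace psi(0-).\<close>

definition H1_neg :: "(real \<Rightarrow> complex^2) \<Rightarrow> (real \<Rightarrow> complex^2) \<Rightarrow> bool" where
  "H1_neg f g \<longleftrightarrow> L2_on {..<0} f \<and> L2_on {..<0} g \<and>
     (\<forall>x\<le>0. (g has_integral (f 0 - f x)) {x..0})"

definition dirac_expr :: "real \<Rightarrow> (real \<Rightarrow> complex^2) \<Rightarrow> (real \<Rightarrow> complex^2) \<Rightarrow> real \<Rightarrow> complex^2" where
  "dirac_expr m f g x = (- \<i>) *s (sigma1 *v g x) + (complex_of_real m) *s (sigma3 *v f x)"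

text \<open>An element psi = psi_- (+) psi_+ of the domain is represented by the pair
  (fm, fp) of its continuous representatives on the closed half-lines (-oo,0] and [0,oo),
  extended by zero outside; this identifies elements of L^2 bijectively.\<close>

definition eigenspace_DA :: "real \<Rightarrow> complex^2^2 \<Rightarrow> complex \<Rightarrow>
    ((real \<Rightarrow> complex^2) \<times> (real \<Rightarrow> complex^2)) set" where
  "eigenspace_DA m A z = {(fm, fp).
     (\<forall>x>0. fm x = 0) \<and> (\<forall>x<0. fp x = 0) \<and>
     (\<exists>gm gp. H1_neg fm gm \<and> H1_pos fp gp \<and>
        (AE x in lborel. x < 0 \<longrightarrow> dirac_expr m fm gm x = z *s fm x) \<and>
        (AE x in lborel. x > 0 \<longrightarrow> dirac_expr m fp gp x = z *s fp x)) \<and>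
     (2 * \<i>) *s (sigma1 *v fp 0) - A *v fp 0 = (2 * \<i>) *s (sigma1 *v fm 0) + A *v fm 0}"

definition is_eigenvalue_DA :: "real \<Rightarrow> complex^2^2 \<Rightarrow> complex \<Rightarrow> bool" where
  "is_eigenvalue_DA m A z \<longleftrightarrow> (\<exists>\<psi>\<in>eigenspace_DA m A z. \<psi> \<noteq> 0)"

definition scaleP :: "complex \<Rightarrow> (real \<Rightarrow> complex^2) \<times> (real \<Rightarrow> complex^2) \<Rightarrow>
    (real \<Rightarrow> complex^2) \<times> (real \<Rightarrow> complex^2)" where
  "scaleP c p = ((\<lambda>x. c *s fst p x), (\<lambda>x. c *s snd p x))"

definition geom_mult_DA :: "real \<Rightarrow> complex^2^2 \<Rightarrow> complex \<Rightarrow> nat" where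
  "geom_mult_DA m A z = vector_space.dim scaleP (eigenspace_DA m A z)"

definition diag2 :: "complex \<Rightarrow> complex \<Rightarrow> complex^2^2" where
  "diag2 a b = (\<chi> i j. if i = j then (if i = 1 then a else b) else 0)"

end

theory Submission
  imports Defs
begin

text \<open>On each half-line the eigenvalue equation is a constant-coefficient first-order system
  whose solutions are combinations of \<open>exp (k x)\<close> and \<open>exp (- k x)\<close>, where
  \<open>k\<^sup>2 = m\<^sup>2 - z\<^sup>2\<close> and \<open>Re k \<ge> 0\<close>. Square integrability kills the growing mode (and
  everything when \<open>k = 0\<close>), so an eigenfunction is determined by the first components
  \<open>u, w\<close> of its two boundary values. After eliminating the second components the jump
  condition becomes two linear equations in \<open>(u, w)\<close>; the kernel is two-dimensional exactly
  when both vanish identically, which forces \<open>A = diag(\<alpha>, -4/\<alpha>)\<close> with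
  \<open>\<alpha> (z + m) = -2 k\<close>, and this relation determines \<open>z\<close>.\<close>

lemma vector_space_scaleP: "vector_space scaleP"
  by unfold_locales
    (auto simp: scaleP_def vector_add_ldistrib vector_sadd_rdistrib vector_smult_assoc
      fun_eq_iff prod_eq_iff)

lemma dim_scaleP_eq_1:
  assumes "p \<in> E" "p \<noteq> 0" "\<And>q. q \<in> E \<Longrightarrow> \<exists>c. q = scaleP c p"
  shows "vector_space.dim scaleP E = 1"
proof -
  interpret v: vector_space scaleP by (rule vector_space_scaleP)
  have "E \<subseteq> v.span {p}"
    using assms(3) unfolding v.span_singleton by blast
  moreover have "v.independent {p}"
    using assms(2) by (simp add: v.independent_insert)
  ultimately show ?thesis
    using assms(1) by (intro v.dim_unique[of "{p}"]) auto
qed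

lemma dim_scaleP_eq_2:
  assumes "p \<in> E" "q \<in> E" "p \<noteq> 0" "\<And>c. q \<noteq> scaleP c p"
    and "\<And>r. r \<in> E \<Longrightarrow> \<exists>a b. r = scaleP a p + scaleP b q"
  shows "vector_space.dim scaleP E = 2"
proof -
  interpret v: vector_space scaleP by (rule vector_space_scaleP)
  have "p \<noteq> q" using assms(4)[of 1] by (auto simp: scaleP_def)
  have span: "E \<subseteq> v.span {q, p}"
  proof
    fix r assume "r \<in> E"
    then obtain a b where r: "r = scaleP a p + scaleP b q" using assms(5) by blast
    have "r - scaleP b q \<in> v.span {p}" unfolding v.span_singleton using r by auto
    then show "r \<in> v.span {q, p}" unfolding v.span_insert[of q] by blast
  qed
  have "q \<notin> v.span {p}" unfolding v.span_singleton using assms(4) by auto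
  then have "v.independent {q, p}"
    using assms(3) \<open>p \<noteq> q\<close> by (simp add: v.independent_insert)
  then show ?thesis
    using assms(1,2) \<open>p \<noteq> q\<close> span by (intro v.dim_unique[of "{q, p}"]) auto
qed

lemma vec2_eq_iff: "(v::'a^2) = w \<longleftrightarrow> v$1 = w$1 \<and> v$2 = w$2"
  by (auto simp: vec_eq_iff forall_2)

lemma matrix_vector_mult_nth_2:
  fixes M :: "'a::semiring_1^2^2"
  shows "(M *v v) $ 1 = M$1$1 * v$1 + M$1$2 * v$2" "(M *v v) $ 2 = M$2$1 * v$1 + M$2$2 * v$2"
  by (simp_all add: matrix_vector_mult_def sum_2)

lemma sigma_nth:
  "sigma1$1$1 = 0" "sigma1$1$2 = 1" "sigma1$2$1 = 1" "sigma1$2$2 = 0"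
  "sigma3$1$1 = 1" "sigma3$1$2 = 0" "sigma3$2$1 = 0" "sigma3$2$2 = -1"
  by (simp_all add: sigma1_def sigma3_def)

lemma diag2_nth [simp]:
  "diag2 a b $1$1 = a" "diag2 a b $1$2 = 0" "diag2 a b $2$1 = 0" "diag2 a b $2$2 = b"
  by (simp_all add: diag2_def)

lemma continuous_on_integral_equation:
  fixes h G :: "real \<Rightarrow> 'a::banach"
  assumes "\<And>t. t \<in> {a..b} \<Longrightarrow> (G has_integral (h t - h a)) {a..t}"
  shows "continuous_on {a..b} h"
proof (cases "a \<le> b")
  case True
  then have "G integrable_on {a..b}" using assms[of b] by auto
  then have "continuous_on {a..b} (\<lambda>t. h a + integral {a..t} G)"
    by (intro continuous_intros indefinite_integral_continuous_1)
  moreover have "h a + integral {a..t} G = h t" if "t \<in> {a..b}" for t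
    using assms[OF that] by (simp add: integral_unique)
  ultimately show ?thesis using continuous_on_eq by force
qed simp

lemma AE_lborel_negligibleE:
  assumes "AE x in lborel. P x"
  obtains N where "negligible N" "\<And>x. x \<notin> N \<Longrightarrow> P x"
proof -
  from assms obtain N where N: "{x \<in> space lborel. \<not> P x} \<subseteq> N" "emeasure lborel N = 0"
      "N \<in> sets lborel"
    by (rule AE_E)
  then have "negligible N"
    using negligible_iff_null_sets null_sets_completionI by blast
  then show ?thesis using N(1) that by auto
qed

text \<open>Since \<open>h\<close> is an indefinite integral of the continuous function \<open>c h\<close>,
  \<open>exp (- c t) * h t\<close> has derivative zero.\<close>

lemma integral_equation_exp:
  fixes h G :: "real \<Rightarrow> complex"
  assumes int: "\<And>t. t \<ge> 0 \<Longrightarrow> (G has_integral (h t - h 0)) {0..t}"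
    and ae: "AE t in lborel. t > 0 \<longrightarrow> G t = c * h t"
    and x: "x \<ge> 0"
  shows "h x = exp (c * x) * h 0"
proof -
  obtain N where N: "negligible N" "\<And>t. t \<notin> N \<Longrightarrow> t > 0 \<longrightarrow> G t = c * h t"
    using ae by (rule AE_lborel_negligibleE) blast
  have ch: "((\<lambda>s. c * h s) has_integral (h t - h 0)) {0..t}" if "t \<ge> 0" for t
    by (rule has_integral_spike[OF _ _ int[OF that], of "N \<union> {0}"]) (use N in force)+
  have "continuous_on {0..x} h"
    using int by (intro continuous_on_integral_equation) auto
  then have cont: "continuous_on {0..x} (\<lambda>s. c * h s)"
    by (intro continuous_intros)
  have der: "(h has_vector_derivative c * h t) (at t within {0..x})" if t: "t \<in> {0..x}" for t
  proof -
    have "((\<lambda>u. h 0 + integral {0..u} (\<lambda>s. c * h s)) has_vector_derivative c * h t)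
        (at t within {0..x})"
      using integral_has_vector_derivative[OF cont t] by (intro derivative_eq_intros) auto
    moreover have "h u = h 0 + integral {0..u} (\<lambda>s. c * h s)" if "u \<in> {0..x}" for u
      using integral_unique[OF ch, of u] that by simp
    ultimately show ?thesis
      by (rule has_vector_derivative_transform[OF t, rotated])
  qed
  define q where "q t = exp (- c * of_real t) * h t" for t
  have "(q has_derivative (\<lambda>_. 0)) (at t within {0..x})" if t: "t \<in> {0..x}" for t
  proof -
    have "((\<lambda>t. exp (- c * of_real t)) has_vector_derivative (- c * exp (- c * of_real t)))
        (at t within {0..x})"
      by (rule has_vector_derivative_real_field) (auto intro!: derivative_eq_intros)
    from has_vector_derivative_mult[OF this der[OF t]]
    have "(q has_vector_derivative 0) (at t within {0..x})"
      unfolding q_def by (simp add: algebra_simps)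
    then show ?thesis by (simp add: has_vector_derivative_def)
  qed
  then obtain k where "\<forall>t\<in>{0..x}. q t = k"
    using has_derivative_zero_constant[of "{0..x}" q] by auto
  then have "q x = q 0"
    using x by auto
  then have "exp (- c * of_real x) * h x = h 0"
    by (simp add: q_def)
  then show ?thesis
    by (metis exp_minus_inverse mult.assoc mult.left_commute mult_1 mult_minus_left)
qed

lemma not_square_integrable_if_bounded_below:
  fixes f :: "real \<Rightarrow> 'a::real_normed_vector"
  assumes "e > 0" "\<And>x. x > 0 \<Longrightarrow> e \<le> norm (f x)"
  shows "\<not> set_integrable lborel {0<..} (\<lambda>x. (norm (f x))\<^sup>2)"
proof
  define g where "g x = indicator {0<..} x *\<^sub>R (norm (f x))\<^sup>2" for x
  assume "set_integrable lborel {0<..} (\<lambda>x. (norm (f x))\<^sup>2)"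
  then have "(\<integral>\<^sup>+x. ennreal (norm (g x)) \<partial>lborel) < \<infinity>"
    by (simp add: set_integrable_def g_def integrable_iff_bounded)
  then obtain r where r: "(\<integral>\<^sup>+x. ennreal (norm (g x)) \<partial>lborel) = ennreal r" "r \<ge> 0"
    by (cases "\<integral>\<^sup>+x. ennreal (norm (g x)) \<partial>lborel") auto
  have "e\<^sup>2 * real n \<le> r" for n :: nat
  proof -
    have "ennreal (e\<^sup>2 * real n) = (\<integral>\<^sup>+x. ennreal (e\<^sup>2) * indicator {1..1 + real n} x \<partial>lborel)"
      by (simp add: nn_integral_cmult_indicator ennreal_mult)
    also have "\<dots> \<le> (\<integral>\<^sup>+x. ennreal (norm (g x)) \<partial>lborel)"
    proof (intro nn_integral_mono)
      fix x
      show "ennreal (e\<^sup>2) * indicator {1..1 + real n} x \<le> ennreal (norm (g x))"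
      proof (cases "x \<in> {1..1 + real n}")
        case True
        then have "e\<^sup>2 \<le> (norm (f x))\<^sup>2" using assms by (auto intro!: power_mono)
        then show ?thesis using True by (auto simp: g_def)
      qed auto
    qed
    finally show ?thesis
      using r assms(1) by (simp add: ennreal_le_iff)
  qed
  moreover obtain n :: nat where "r / e\<^sup>2 < real n" using reals_Archimedean2 by blast
  ultimately show False
    using assms(1) by (metis linorder_not_le mult.commute pos_divide_less_eq zero_less_power)
qed

definition coord_comb :: "complex \<Rightarrow> complex \<Rightarrow> complex^2 \<Rightarrow> complex" where
  "coord_comb a b v = a * v$1 + b * v$2"

lemma bounded_linear_coord_comb: "bounded_linear (coord_comb a b)"
  unfolding coord_comb_def
  by (intro bounded_linear_add bounded_linear_compose[OF bounded_linear_mult_right bounded_linear_vec_nth])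

lemma dirac_expr_eq_iff:
  "dirac_expr m f g x = z *s f x \<longleftrightarrow>
     g x $1 = \<i> * (z + of_real m) * f x $2 \<and> g x $2 = \<i> * (z - of_real m) * f x $1"
proof -
  have neg_i: "- \<i> * b = a \<longleftrightarrow> b = \<i> * a" for a b :: complex
    by (metis complex_i_mult_minus minus_minus mult.assoc mult_minus_left)
  have "dirac_expr m f g x = z *s f x \<longleftrightarrow>
     - \<i> * g x $2 = (z - of_real m) * f x $1 \<and> - \<i> * g x $1 = (z + of_real m) * f x $2"
    by (simp add: dirac_expr_def vec2_eq_iff matrix_vector_mult_nth_2 sigma_nth)
      (rule conj_cong; rule iffI; algebra)
  then show ?thesis
    unfolding neg_i by (auto simp: mult.assoc)
qed

text \<open>The last two hypotheses say that \<open>(a, b)\<close> is a left eigenvector, for the eigenvalue \<open>c\<close>,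
  of the coefficient matrix of \<open>\<psi>\<^sub>1' = i (z + m) \<psi>\<^sub>2\<close>, \<open>\<psi>\<^sub>2' = i (z - m) \<psi>\<^sub>1\<close>.\<close>

lemma dirac_eigen_coord_comb:
  assumes "AE x in lborel. x > 0 \<longrightarrow> dirac_expr m f g x = z *s f x"
    and "b * (\<i> * (z - of_real m)) = c * a" "a * (\<i> * (z + of_real m)) = c * b"
  shows "AE x in lborel. x > 0 \<longrightarrow> coord_comb a b (g x) = c * coord_comb a b (f x)"
  using assms(1)
proof (rule eventually_mono, intro impI)
  fix x assume "x > 0 \<longrightarrow> dirac_expr m f g x = z *s f x" "x > 0"
  then have g: "g x $1 = \<i> * (z + of_real m) * f x $2" "g x $2 = \<i> * (z - of_real m) * f x $1"
    by (auto simp: dirac_expr_eq_iff)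
  have "coord_comb a b (g x) = (a * (\<i> * (z + of_real m))) * f x $2 + (b * (\<i> * (z - of_real m))) * f x $1"
    by (simp add: coord_comb_def g algebra_simps)
  also have "\<dots> = c * coord_comb a b (f x)"
    unfolding assms(2,3) by (simp add: coord_comb_def algebra_simps)
  finally show "coord_comb a b (g x) = c * coord_comb a b (f x)" .
qed

lemma H1_pos_coord_comb_exp:
  assumes "H1_pos f g"
    and "AE x in lborel. x > 0 \<longrightarrow> coord_comb a b (g x) = c * coord_comb a b (f x)"
    and "x \<ge> 0"
  shows "coord_comb a b (f x) = exp (c * x) * coord_comb a b (f 0)"
proof (rule integral_equation_exp[OF _ assms(2,3)])
  fix t :: real assume "t \<ge> 0"
  then have "(g has_integral (f t - f 0)) {0..t}" using assms(1) by (simp add: H1_pos_def)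
  from has_integral_linear[OF this bounded_linear_coord_comb]
  show "((\<lambda>x. coord_comb a b (g x)) has_integral (coord_comb a b (f t) - coord_comb a b (f 0))) {0..t}"
    by (simp add: o_def coord_comb_def algebra_simps)
qed

lemma H1_pos_coord_comb_vanishes:
  assumes "H1_pos f g"
    and "AE x in lborel. x > 0 \<longrightarrow> coord_comb a b (g x) = c * coord_comb a b (f x)"
    and "Re c \<ge> 0"
  shows "coord_comb a b (f 0) = 0"
proof (rule ccontr)
  assume nz: "coord_comb a b (f 0) \<noteq> 0"
  obtain K where K: "K > 0" "\<And>v. norm (coord_comb a b v) \<le> norm v * K"
    using bounded_linear.pos_bounded[OF bounded_linear_coord_comb] by blast
  have "norm (coord_comb a b (f 0)) / K \<le> norm (f x)" if x: "x > 0" for x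
  proof -
    have "norm (coord_comb a b (f 0)) \<le> exp (Re c * x) * norm (coord_comb a b (f 0))"
      using assms(3) x by (intro mult_le_cancel_right1[THEN iffD2]) auto
    also have "\<dots> = norm (coord_comb a b (f x))"
      using H1_pos_coord_comb_exp[OF assms(1,2), of x] x by (simp add: norm_mult norm_exp_eq_Re)
    also have "\<dots> \<le> norm (f x) * K" by (rule K(2))
    finally show ?thesis using K(1) by (simp add: field_simps)
  qed
  moreover have "norm (coord_comb a b (f 0)) / K > 0" using nz K(1) by simp
  ultimately show False
    using not_square_integrable_if_bounded_below assms(1)
    by (auto simp: H1_pos_def L2_on_def)
qed

definition eigenfun_pos :: "real \<Rightarrow> complex \<Rightarrow> (real \<Rightarrow> complex^2) \<Rightarrow> bool" where
  "eigenfun_pos m z f \<longleftrightarrow> (\<forall>x<0. f x = 0) \<and>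
     (\<exists>g. H1_pos f g \<and> (AE x in lborel. x > 0 \<longrightarrow> dirac_expr m f g x = z *s f x))"

definition eigenfun_neg :: "real \<Rightarrow> complex \<Rightarrow> (real \<Rightarrow> complex^2) \<Rightarrow> bool" where
  "eigenfun_neg m z f \<longleftrightarrow> (\<forall>x>0. f x = 0) \<and>
     (\<exists>g. H1_neg f g \<and> (AE x in lborel. x < 0 \<longrightarrow> dirac_expr m f g x = z *s f x))"

definition jump_cond :: "complex^2^2 \<Rightarrow> complex^2 \<Rightarrow> complex^2 \<Rightarrow> bool" where
  "jump_cond A u w \<longleftrightarrow> (2 * \<i>) *s (sigma1 *v w) - A *v w = (2 * \<i>) *s (sigma1 *v u) + A *v u"

lemma eigenspace_DA_iff:
  "(fm, fp) \<in> eigenspace_DA m A z \<longleftrightarrow>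
     eigenfun_neg m z fm \<and> eigenfun_pos m z fp \<and> jump_cond A (fm 0) (fp 0)"
  unfolding eigenspace_DA_def eigenfun_neg_def eigenfun_pos_def jump_cond_def by blast

lemma jump_cond_iff:
  "jump_cond A u w \<longleftrightarrow>
    2 * \<i> * w$2 - (A$1$1 * w$1 + A$1$2 * w$2) = 2 * \<i> * u$2 + (A$1$1 * u$1 + A$1$2 * u$2) \<and>
    2 * \<i> * w$1 - (A$2$1 * w$1 + A$2$2 * w$2) = 2 * \<i> * u$1 + (A$2$1 * u$1 + A$2$2 * u$2)"
  by (simp add: jump_cond_def vec2_eq_iff matrix_vector_mult_nth_2 sigma_nth)

lemma eigenfun_pos_zero: "eigenfun_pos m z (\<lambda>_. 0)"
  by (auto simp: eigenfun_pos_def H1_pos_def L2_on_def set_integrable_def dirac_expr_def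
      intro!: exI[of _ "\<lambda>_. 0"])

lemma eigenfun_neg_zero: "eigenfun_neg m z (\<lambda>_. 0)"
  by (auto simp: eigenfun_neg_def H1_neg_def L2_on_def set_integrable_def dirac_expr_def
      intro!: exI[of _ "\<lambda>_. 0"])

text \<open>Since \<open>\<sigma>\<^sub>3 \<sigma>\<^sub>1 \<sigma>\<^sub>3 = - \<sigma>\<^sub>1\<close>, the map \<open>\<psi> \<mapsto> \<sigma>\<^sub>3 \<psi>(-x)\<close>
  maps solutions of the Dirac equation on one half-line to solutions on the other.\<close>

definition reflect :: "(real \<Rightarrow> complex^2) \<Rightarrow> real \<Rightarrow> complex^2" where
  "reflect f t = sigma3 *v f (- t)"

lemma reflect_nth [simp]: "reflect f x $1 = f (- x) $1" "reflect f x $2 = - f (- x) $2"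
  by (simp_all add: reflect_def matrix_vector_mult_nth_2 sigma_nth)

lemma norm_reflect: "norm (reflect f x) = norm (f (- x))"
  unfolding norm_vec_def by (rule L2_set_cong) (auto simp: UNIV_2)

lemma AE_lborel_reflect:
  assumes "AE x in lborel. P x"
  shows "AE x in lborel. P (- x :: real)"
proof -
  from assms obtain N where N: "{x \<in> space lborel. \<not> P x} \<subseteq> N" "emeasure lborel N = 0"
      "N \<in> sets lborel"
    by (rule AE_E)
  have meas: "(uminus :: real \<Rightarrow> real) \<in> measurable lborel borel" by simp
  have "emeasure lborel (uminus -` N \<inter> space lborel) = emeasure (distr lborel borel uminus) N"
    using emeasure_distr[OF meas, of N] N(3) by simp
  also have "\<dots> = 0" using N(2) by (simp add: lborel_distr_uminus)
  finally have "emeasure lborel (uminus -` N) = 0" by simp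
  moreover have "uminus -` N \<inter> space lborel \<in> sets lborel"
    by (rule measurable_sets[OF meas]) (use N(3) in simp)
  ultimately have "uminus -` N \<in> null_sets lborel" by auto
  then show ?thesis
    by (rule AE_I') (use N(1) in auto)
qed

lemma L2_on_reflect:
  assumes L: "L2_on S f" and T: "\<And>x. x \<in> T \<longleftrightarrow> - x \<in> S"
  shows "L2_on T (reflect f)"
proof -
  have m: "(\<lambda>x. indicator S x *\<^sub>R f x) \<in> borel_measurable lborel"
    and i: "integrable lborel (\<lambda>x. indicator S x *\<^sub>R (norm (f x))\<^sup>2)"
    using L by (auto simp: L2_on_def set_integrable_def)
  have "(\<lambda>x. (\<lambda>x. indicator S x *\<^sub>R f x) (- x)) \<in> borel_measurable lborel"
    using m by measurable
  then have "(\<lambda>x. sigma3 *v ((\<lambda>x. indicator S x *\<^sub>R f x) (- x))) \<in> borel_measurable lborel"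
    by (rule measurable_compose[OF _ borel_measurable_continuous_onI]) (intro continuous_intros)
  moreover have "(\<lambda>x. indicator T x *\<^sub>R reflect f x) =
      (\<lambda>x. sigma3 *v ((\<lambda>x. indicator S x *\<^sub>R f x) (- x)))"
    by (auto simp: reflect_def indicator_def T fun_eq_iff)
  moreover have "(\<lambda>x. indicator T x *\<^sub>R (norm (reflect f x))\<^sup>2) =
      (\<lambda>x. (\<lambda>x. indicator S x *\<^sub>R (norm (f x))\<^sup>2) (0 + (-1) * x))"
    by (auto simp: indicator_def T fun_eq_iff norm_reflect)
  ultimately show ?thesis
    using lborel_integrable_real_affine_iff[of "-1" "\<lambda>x. indicator S x *\<^sub>R (norm (f x))\<^sup>2" 0] i
    by (simp add: L2_on_def set_integrable_def)
qed

lemma L2_on_uminus: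
  assumes "L2_on S g"
  shows "L2_on S (\<lambda>t. - g t)"
proof -
  have "(\<lambda>x. indicator S x *\<^sub>R g x) \<in> borel_measurable lborel"
    using assms by (simp add: L2_on_def)
  then have "(\<lambda>x. - (indicator S x *\<^sub>R g x)) \<in> borel_measurable lborel"
    by measurable
  then show ?thesis using assms by (simp add: L2_on_def)
qed

lemma has_integral_reflect:
  assumes "(g has_integral (f b - f a)) {a..b}"
  shows "(reflect (\<lambda>t. - g t) has_integral (reflect f (- a) - reflect f (- b))) {- b..- a}"
proof -
  have "((\<lambda>t. g (- t)) has_integral (f b - f a)) {- b..- a}"
    using assms by (subst has_integral_reflect_real)
  from has_integral_linear[OF this bounded_linear_minus[OF matrix_vector_mul_bounded_linear[of sigma3]]]
  have "((\<lambda>t. - (sigma3 *v g (- t))) has_integral - (sigma3 *v (f b - f a))) {- b..- a}"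
    by (simp add: o_def)
  moreover have "reflect (\<lambda>t. - g t) = (\<lambda>t. - (sigma3 *v g (- t)))"
    by (simp add: fun_eq_iff vec2_eq_iff reflect_def matrix_vector_mult_nth_2)
  moreover have "- (sigma3 *v (f b - f a)) = reflect f (- a) - reflect f (- b)"
    by (simp add: vec2_eq_iff matrix_vector_mult_nth_2 sigma_nth)
  ultimately show ?thesis by simp
qed

lemma dirac_expr_reflect:
  "dirac_expr m (reflect f) (reflect (\<lambda>t. - g t)) x = z *s reflect f x \<longleftrightarrow>
    dirac_expr m f g (- x) = z *s f (- x)"
  by (simp add: dirac_expr_eq_iff)

lemma H1_neg_reflect:
  assumes "H1_neg f g"
  shows "H1_pos (reflect f) (reflect (\<lambda>t. - g t))"
  unfolding H1_pos_def
proof (intro conjI allI impI)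
  show "L2_on {0<..} (reflect f)" "L2_on {0<..} (reflect (\<lambda>t. - g t))"
    using assms by (auto simp: H1_neg_def intro!: L2_on_reflect L2_on_uminus)
  fix x :: real assume "x \<ge> 0"
  then have "(g has_integral (f 0 - f (- x))) {- x..0}" using assms by (simp add: H1_neg_def)
  from has_integral_reflect[OF this]
  show "(reflect (\<lambda>t. - g t) has_integral (reflect f x - reflect f 0)) {0..x}" by simp
qed

lemma H1_pos_reflect:
  assumes "H1_pos f g"
  shows "H1_neg (reflect f) (reflect (\<lambda>t. - g t))"
  unfolding H1_neg_def
proof (intro conjI allI impI)
  show "L2_on {..<0} (reflect f)" "L2_on {..<0} (reflect (\<lambda>t. - g t))"
    using assms by (auto simp: H1_pos_def intro!: L2_on_reflect L2_on_uminus)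
  fix x :: real assume "x \<le> 0"
  then have "(g has_integral (f (- x) - f 0)) {0..- x}" using assms by (simp add: H1_pos_def)
  from has_integral_reflect[OF this]
  show "(reflect (\<lambda>t. - g t) has_integral (reflect f 0 - reflect f x)) {x..0}" by simp
qed

lemma eigenfun_neg_reflect:
  assumes "eigenfun_neg m z f"
  shows "eigenfun_pos m z (reflect f)"
proof -
  obtain g where f: "\<forall>x>0. f x = 0" "H1_neg f g"
    and ae: "AE x in lborel. x < 0 \<longrightarrow> dirac_expr m f g x = z *s f x"
    using assms by (auto simp: eigenfun_neg_def)
  have "AE x in lborel. x > 0 \<longrightarrow>
      dirac_expr m (reflect f) (reflect (\<lambda>t. - g t)) x = z *s reflect f x"
    using AE_lborel_reflect[OF ae] by (simp add: dirac_expr_reflect)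
  then show ?thesis
    using f H1_neg_reflect by (auto simp: eigenfun_pos_def reflect_def)
qed

lemma eigenfun_pos_reflect:
  assumes "eigenfun_pos m z f"
  shows "eigenfun_neg m z (reflect f)"
proof -
  obtain g where f: "\<forall>x<0. f x = 0" "H1_pos f g"
    and ae: "AE x in lborel. x > 0 \<longrightarrow> dirac_expr m f g x = z *s f x"
    using assms by (auto simp: eigenfun_pos_def)
  have "AE x in lborel. x < 0 \<longrightarrow>
      dirac_expr m (reflect f) (reflect (\<lambda>t. - g t)) x = z *s reflect f x"
    using AE_lborel_reflect[OF ae] by (simp add: dirac_expr_reflect)
  then show ?thesis
    using f H1_pos_reflect by (auto simp: eigenfun_neg_def reflect_def)
qed

lemma eigenfun_pos_threshold:
  assumes "eigenfun_pos m z f" "z\<^sup>2 = (of_real m)\<^sup>2"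
  shows "f x = 0"
proof -
  obtain g where f: "\<forall>x<0. f x = 0" "H1_pos f g"
    and ae: "AE x in lborel. x > 0 \<longrightarrow> dirac_expr m f g x = z *s f x"
    using assms(1) by (auto simp: eigenfun_pos_def)
  have comps: "AE x in lborel. x > 0 \<longrightarrow>
      g x $1 = \<i> * (z + of_real m) * f x $2 \<and> g x $2 = \<i> * (z - of_real m) * f x $1"
    using ae by (rule eventually_mono) (simp add: dirac_expr_eq_iff)
  have vanish: "coord_comb a b (f x) = 0"
    if "AE x in lborel. x > 0 \<longrightarrow> coord_comb a b (g x) = 0 * coord_comb a b (f x)" "x \<ge> 0"
    for a b x
    using H1_pos_coord_comb_exp[OF f(2) that] H1_pos_coord_comb_vanishes[OF f(2) that(1)]
    by simp
  have "(z + of_real m) * (z - of_real m) = 0"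
    using assms(2) by (simp add: power2_eq_square algebra_simps)
  then have "\<forall>x\<ge>0. f x $1 = 0 \<and> f x $2 = 0"
  proof (elim mult_eq_0_iff[THEN iffD1, elim_format] disjE)
    assume s: "z + of_real m = 0"
    have 1: "f x $1 = 0" if "x \<ge> 0" for x
      using vanish[OF dirac_eigen_coord_comb[OF ae, of 0 _ 1] that] s by (simp add: coord_comb_def)
    have "AE x in lborel. x > 0 \<longrightarrow> coord_comb 0 1 (g x) = 0 * coord_comb 0 1 (f x)"
      using comps by (rule eventually_mono) (simp add: coord_comb_def 1)
    from vanish[OF this] 1 show ?thesis by (simp add: coord_comb_def)
  next
    assume t: "z - of_real m = 0"
    have 2: "f x $2 = 0" if "x \<ge> 0" for x
      using vanish[OF dirac_eigen_coord_comb[OF ae, of 1 _ 0] that] t by (simp add: coord_comb_def)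
    have "AE x in lborel. x > 0 \<longrightarrow> coord_comb 1 0 (g x) = 0 * coord_comb 1 0 (f x)"
      using comps by (rule eventually_mono) (simp add: coord_comb_def 2)
    from vanish[OF this] 2 show ?thesis by (simp add: coord_comb_def)
  qed
  then show ?thesis
    using f(1) by (cases "x \<ge> 0") (auto simp: vec2_eq_iff)
qed

lemma decay_rate_shift_nonzero:
  fixes k :: complex
  assumes "k\<^sup>2 = (of_real m)\<^sup>2 - z\<^sup>2" "k \<noteq> 0"
  shows "z + of_real m \<noteq> 0"
  using assms by (auto simp: add_eq_0_iff2)

text \<open>With \<open>k\<^sup>2 = m\<^sup>2 - z\<^sup>2\<close> the combinations \<open>k \<psi>\<^sub>1 \<plusminus> i (z + m) \<psi>\<^sub>2\<close> satisfy
  \<open>h' = \<plusminus> k h\<close>; the growing one must vanish, the other one decays.\<close>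

lemma eigenfun_pos_decay:
  fixes k :: complex
  assumes "eigenfun_pos m z f" "k\<^sup>2 = (of_real m)\<^sup>2 - z\<^sup>2" "Re k \<ge> 0" "k \<noteq> 0"
  shows "k * f 0 $1 + \<i> * (z + of_real m) * f 0 $2 = 0"
    and "x \<ge> 0 \<Longrightarrow> f x = exp (- k * x) *s f 0"
proof -
  obtain g where f: "H1_pos f g"
    and ae: "AE x in lborel. x > 0 \<longrightarrow> dirac_expr m f g x = z *s f x"
    using assms(1) by (auto simp: eigenfun_pos_def)
  define s where "s = z + of_real m"
  have s: "s \<noteq> 0" using decay_rate_shift_nonzero[OF assms(2,4)] by (simp add: s_def)
  have st: "(\<i> * s) * (\<i> * (z - of_real m)) = k * k"
    using assms(2) by (simp add: s_def power2_eq_square algebra_simps)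
  have ap: "AE x in lborel. x > 0 \<longrightarrow> coord_comb k (\<i> * s) (g x) = k * coord_comb k (\<i> * s) (f x)"
    by (rule dirac_eigen_coord_comb[OF ae]) (use st in \<open>simp_all add: s_def algebra_simps\<close>)
  have am: "AE x in lborel. x > 0 \<longrightarrow>
      coord_comb (- k) (\<i> * s) (g x) = - k * coord_comb (- k) (\<i> * s) (f x)"
    by (rule dirac_eigen_coord_comb[OF ae]) (use st in \<open>simp_all add: s_def algebra_simps\<close>)
  have bc: "k * f 0 $1 + \<i> * s * f 0 $2 = 0"
    using H1_pos_coord_comb_vanishes[OF f ap assms(3)] by (simp add: coord_comb_def mult.assoc)
  then show "k * f 0 $1 + \<i> * (z + of_real m) * f 0 $2 = 0"
    by (simp add: s_def)
  assume x: "x \<ge> 0"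
  define E where "E = exp (- k * x)"
  have p: "k * f x $1 + \<i> * s * f x $2 = 0"
    using H1_pos_coord_comb_exp[OF f ap x] bc by (simp add: coord_comb_def mult.assoc)
  have q: "- k * f x $1 + \<i> * s * f x $2 = E * (- k * f 0 $1 + \<i> * s * f 0 $2)"
    using H1_pos_coord_comb_exp[OF f am x] by (simp add: E_def coord_comb_def mult.assoc)
  have "2 * \<i> * s * (f x $2 - E * f 0 $2) = 0" "2 * k * (f x $1 - E * f 0 $1) = 0"
    using p q bc by algebra+
  then show "f x = exp (- k * x) *s f 0"
    using s assms(4) by (simp add: vec2_eq_iff E_def)
qed

lemma eigenfun_neg_threshold:
  assumes "eigenfun_neg m z f" "z\<^sup>2 = (of_real m)\<^sup>2"
  shows "f x = 0"
  using eigenfun_pos_threshold[OF eigenfun_neg_reflect[OF assms(1)] assms(2), of "- x"]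
  by (simp add: vec2_eq_iff)

lemma eigenfun_neg_decay:
  fixes k :: complex
  assumes "eigenfun_neg m z f" "k\<^sup>2 = (of_real m)\<^sup>2 - z\<^sup>2" "Re k \<ge> 0" "k \<noteq> 0"
  shows "- k * f 0 $1 + \<i> * (z + of_real m) * f 0 $2 = 0"
    and "x \<le> 0 \<Longrightarrow> f x = exp (k * x) *s f 0"
proof -
  note decay = eigenfun_pos_decay[OF eigenfun_neg_reflect[OF assms(1)] assms(2-4)]
  show "- k * f 0 $1 + \<i> * (z + of_real m) * f 0 $2 = 0"
    using decay(1) by simp
  show "f x = exp (k * x) *s f 0" if "x \<le> 0"
    using decay(2)[of "- x"] that by (simp add: vec2_eq_iff)
qed

lemma eigenfun_pos_proportional:
  fixes k :: complex
  assumes "eigenfun_pos m z f" "eigenfun_pos m z f'"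
    and "k\<^sup>2 = (of_real m)\<^sup>2 - z\<^sup>2" "Re k \<ge> 0" "k \<noteq> 0"
    and "f 0 $1 = c * f' 0 $1"
  shows "f = (\<lambda>x. c *s f' x)"
proof
  fix x
  have "\<i> * (z + of_real m) * (f 0 $2 - c * f' 0 $2) = 0"
    using eigenfun_pos_decay(1)[OF assms(1,3-5)] eigenfun_pos_decay(1)[OF assms(2,3-5)] assms(6)
    by algebra
  then have "f 0 = c *s f' 0"
    using decay_rate_shift_nonzero[OF assms(3,5)] assms(6) by (simp add: vec2_eq_iff)
  then show "f x = c *s f' x"
  proof (cases "x \<ge> 0")
    case True
    then show ?thesis
      using eigenfun_pos_decay(2)[OF assms(1,3-5) True] eigenfun_pos_decay(2)[OF assms(2,3-5) True]
        \<open>f 0 = c *s f' 0\<close>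
      by (metis mult.commute vector_smult_assoc)
  next
    case False
    then show ?thesis using assms(1,2) by (simp add: eigenfun_pos_def)
  qed
qed

lemma eigenfun_neg_proportional:
  fixes k :: complex
  assumes "eigenfun_neg m z f" "eigenfun_neg m z f'"
    and "k\<^sup>2 = (of_real m)\<^sup>2 - z\<^sup>2" "Re k \<ge> 0" "k \<noteq> 0"
    and "f 0 $1 = c * f' 0 $1"
  shows "f = (\<lambda>x. c *s f' x)"
proof
  fix x
  have "\<i> * (z + of_real m) * (f 0 $2 - c * f' 0 $2) = 0"
    using eigenfun_neg_decay(1)[OF assms(1,3-5)] eigenfun_neg_decay(1)[OF assms(2,3-5)] assms(6)
    by algebra
  then have "f 0 = c *s f' 0"
    using decay_rate_shift_nonzero[OF assms(3,5)] assms(6) by (simp add: vec2_eq_iff)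
  then show "f x = c *s f' x"
  proof (cases "x \<le> 0")
    case True
    then show ?thesis
      using eigenfun_neg_decay(2)[OF assms(1,3-5) True] eigenfun_neg_decay(2)[OF assms(2,3-5) True]
        \<open>f 0 = c *s f' 0\<close>
      by (metis mult.commute vector_smult_assoc)
  next
    case False
    then show ?thesis using assms(1,2) by (simp add: eigenfun_neg_def)
  qed
qed

lemma eigenspace_DA_threshold:
  assumes "(fm, fp) \<in> eigenspace_DA m A z" "z\<^sup>2 = (of_real m)\<^sup>2"
  shows "(fm, fp) = 0"
proof -
  have "eigenfun_neg m z fm" "eigenfun_pos m z fp"
    using assms(1) by (simp_all add: eigenspace_DA_iff)
  then have "fm = 0" "fp = 0"
    using eigenfun_neg_threshold eigenfun_pos_threshold assms(2) by (simp_all add: fun_eq_iff)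
  then show ?thesis by (simp add: zero_prod_def)
qed

lemma eigenvalue_DA_decay_rate:
  assumes "is_eigenvalue_DA m A z"
  obtains k where "k\<^sup>2 = (of_real m)\<^sup>2 - z\<^sup>2" "Re k \<ge> 0" "k \<noteq> 0"
proof
  define k where "k = csqrt ((of_real m)\<^sup>2 - z\<^sup>2)"
  show k2: "k\<^sup>2 = (of_real m)\<^sup>2 - z\<^sup>2" "Re k \<ge> 0"
    unfolding k_def by (simp add: power2_csqrt) (rule Re_csqrt)
  obtain fm fp where p: "(fm, fp) \<in> eigenspace_DA m A z" "(fm, fp) \<noteq> 0"
    using assms by (auto simp: is_eigenvalue_DA_def)
  show "k \<noteq> 0"
  proof
    assume "k = 0"
    then have "z\<^sup>2 = (of_real m)\<^sup>2" using k2(1) by simp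
    then show False using eigenspace_DA_threshold[OF p(1)] p(2) by simp
  qed
qed

lemma eigenspace_DA_proportional:
  fixes k :: complex
  assumes "(fm, fp) \<in> eigenspace_DA m A z" "(fm', fp') \<in> eigenspace_DA m A z"
    and "k\<^sup>2 = (of_real m)\<^sup>2 - z\<^sup>2" "Re k \<ge> 0" "k \<noteq> 0"
    and "fm 0 $1 = c * fm' 0 $1" "fp 0 $1 = c * fp' 0 $1"
  shows "(fm, fp) = scaleP c (fm', fp')"
proof -
  have "eigenfun_neg m z fm" "eigenfun_neg m z fm'" "eigenfun_pos m z fp" "eigenfun_pos m z fp'"
    using assms(1,2) by (simp_all add: eigenspace_DA_iff)
  then have "fm = (\<lambda>x. c *s fm' x)" "fp = (\<lambda>x. c *s fp' x)"
    using eigenfun_neg_proportional[of m z fm fm' k c] eigenfun_pos_proportional[of m z fp fp' k c]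
      assms(3-7)
    by blast+
  then show ?thesis by (simp add: scaleP_def)
qed

lemma eigenspace_DA_first_coords_nonzero:
  fixes k :: complex
  assumes "(fm, fp) \<in> eigenspace_DA m A z" "(fm, fp) \<noteq> 0"
    and "k\<^sup>2 = (of_real m)\<^sup>2 - z\<^sup>2" "Re k \<ge> 0" "k \<noteq> 0"
  shows "fm 0 $1 \<noteq> 0 \<or> fp 0 $1 \<noteq> 0"
proof (rule ccontr)
  assume "\<not> (fm 0 $1 \<noteq> 0 \<or> fp 0 $1 \<noteq> 0)"
  then have "(fm, fp) = scaleP 0 (fm, fp)"
    by (intro eigenspace_DA_proportional[OF assms(1,1,3-5)]) auto
  then show False
    using assms(2) by (simp add: scaleP_def zero_prod_def zero_fun_def)
qed

text \<open>Multiplying the rows of the jump condition by \<open>s = z + m\<close> and eliminating the second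
  components with the decay relations of both half-lines.\<close>

lemma jump_cond_first_coords:
  fixes k s :: complex
  assumes "jump_cond A u w" "- k * u$1 + \<i> * s * u$2 = 0" "k * w$1 + \<i> * s * w$2 = 0"
  shows "w$1 * (- 2 * k - A$1$1 * s - \<i> * A$1$2 * k) = u$1 * (2 * k + A$1$1 * s - \<i> * A$1$2 * k)"
    and "w$1 * (2 * \<i> * s - A$2$1 * s - \<i> * A$2$2 * k) = u$1 * (2 * \<i> * s + A$2$1 * s - \<i> * A$2$2 * k)"
proof -
  have ii: "\<i> * \<i> = -1" by simp
  show "w$1 * (- 2 * k - A$1$1 * s - \<i> * A$1$2 * k) = u$1 * (2 * k + A$1$1 * s - \<i> * A$1$2 * k)"
    using assms ii unfolding jump_cond_iff by algebra
  show "w$1 * (2 * \<i> * s - A$2$1 * s - \<i> * A$2$2 * k) = u$1 * (2 * \<i> * s + A$2$1 * s - \<i> * A$2$2 * k)"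
    using assms ii unfolding jump_cond_iff by algebra
qed

lemma eigenspace_DA_first_coords:
  fixes m :: real and z k :: complex
  defines "s \<equiv> z + of_real m"
  assumes "(fm, fp) \<in> eigenspace_DA m A z"
    and "k\<^sup>2 = (of_real m)\<^sup>2 - z\<^sup>2" "Re k \<ge> 0" "k \<noteq> 0"
  shows "fp 0 $1 * (- 2 * k - A$1$1 * s - \<i> * A$1$2 * k) = fm 0 $1 * (2 * k + A$1$1 * s - \<i> * A$1$2 * k)"
    and "fp 0 $1 * (2 * \<i> * s - A$2$1 * s - \<i> * A$2$2 * k) = fm 0 $1 * (2 * \<i> * s + A$2$1 * s - \<i> * A$2$2 * k)"
proof -
  have "eigenfun_neg m z fm" "eigenfun_pos m z fp" "jump_cond A (fm 0) (fp 0)"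
    using assms(2) by (simp_all add: eigenspace_DA_iff)
  note jump_cond_first_coords[OF this(3) eigenfun_neg_decay(1)[OF this(1) assms(3-5)]
      eigenfun_pos_decay(1)[OF this(2) assms(3-5)]]
  then show "fp 0 $1 * (- 2 * k - A$1$1 * s - \<i> * A$1$2 * k) = fm 0 $1 * (2 * k + A$1$1 * s - \<i> * A$1$2 * k)"
    and "fp 0 $1 * (2 * \<i> * s - A$2$1 * s - \<i> * A$2$2 * k) = fm 0 $1 * (2 * \<i> * s + A$2$1 * s - \<i> * A$2$2 * k)"
    by (simp_all add: s_def)
qed

lemma jump_coeffs_vanish_imp_exceptional:
  fixes k s :: complex
  assumes "k \<noteq> 0" "s \<noteq> 0"
    and "- 2 * k - A$1$1 * s - \<i> * A$1$2 * k = 0" "2 * k + A$1$1 * s - \<i> * A$1$2 * k = 0"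
    and "2 * \<i> * s - A$2$1 * s - \<i> * A$2$2 * k = 0" "2 * \<i> * s + A$2$1 * s - \<i> * A$2$2 * k = 0"
  shows "\<exists>\<alpha>. \<alpha> \<noteq> 0 \<and> A = diag2 \<alpha> (- 4 / \<alpha>)"
proof (intro exI conjI)
  have "- 2 * \<i> * A$1$2 * k = 0" "2 * A$2$1 * s = 0" "2 * \<i> * (2 * s - A$2$2 * k) = 0"
    using assms(3-6) by algebra+
  then have "A$1$2 = 0" "A$2$1 = 0" "A$2$2 * k = 2 * s"
    using assms(1,2) by auto
  moreover have "A$1$1 * s = - 2 * k"
    using assms(4) \<open>A$1$2 = 0\<close> by algebra
  ultimately show "A = diag2 (- 2 * k / s) (- 4 / (- 2 * k / s))"
    using assms(1,2) by (simp add: vec2_eq_iff field_simps)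
  show "- 2 * k / s \<noteq> 0" using assms(1,2) by simp
qed

lemma proportional_or_coeffs_vanish:
  fixes u w u' w' p1 r1 p2 r2 :: "'a::field"
  assumes "w' * p1 = u' * r1" "w' * p2 = u' * r2" "w * p1 = u * r1" "w * p2 = u * r2"
    and "u' \<noteq> 0 \<or> w' \<noteq> 0"
  shows "(\<exists>c. u = c * u' \<and> w = c * w') \<or> (p1 = 0 \<and> r1 = 0 \<and> p2 = 0 \<and> r2 = 0)"
proof (cases "u' * w = u * w'")
  case True
  show ?thesis
  proof (cases "u' = 0")
    case False
    then show ?thesis using True by (intro disjI1 exI[of _ "u / u'"]) (auto simp: field_simps)
  next
    case u': True
    then have "w' \<noteq> 0" "u = 0" using True assms(5) by auto
    then show ?thesis using u' by (intro disjI1 exI[of _ "w / w'"]) auto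
  qed
next
  case False
  have "(u' * w - u * w') * p1 = 0" "(u' * w - u * w') * r1 = 0"
    "(u' * w - u * w') * p2 = 0" "(u' * w - u * w') * r2 = 0"
    using assms(1-4) by algebra+
  then show ?thesis using False by simp
qed

lemma geom_mult_DA_eq_1:
  assumes "is_eigenvalue_DA m A z" "\<not> (\<exists>\<alpha>. \<alpha> \<noteq> 0 \<and> A = diag2 \<alpha> (- 4 / \<alpha>))"
  shows "geom_mult_DA m A z = 1"
proof -
  obtain k where k: "k\<^sup>2 = (of_real m)\<^sup>2 - z\<^sup>2" "Re k \<ge> 0" "k \<noteq> 0"
    using assms(1) by (rule eigenvalue_DA_decay_rate)
  define s where "s = z + of_real m"
  have s: "s \<noteq> 0" using decay_rate_shift_nonzero[OF k(1,3)] by (simp add: s_def)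
  have coeffs: "\<not> (- 2 * k - A$1$1 * s - \<i> * A$1$2 * k = 0 \<and> 2 * k + A$1$1 * s - \<i> * A$1$2 * k = 0 \<and>
      2 * \<i> * s - A$2$1 * s - \<i> * A$2$2 * k = 0 \<and> 2 * \<i> * s + A$2$1 * s - \<i> * A$2$2 * k = 0)"
    using jump_coeffs_vanish_imp_exceptional[OF k(3) s] assms(2) by blast
  obtain fm0 fp0 where p0: "(fm0, fp0) \<in> eigenspace_DA m A z" "(fm0, fp0) \<noteq> 0"
    using assms(1) by (auto simp: is_eigenvalue_DA_def)
  show ?thesis unfolding geom_mult_DA_def
  proof (rule dim_scaleP_eq_1[OF p0])
    fix q assume "q \<in> eigenspace_DA m A z"
    then obtain fm fp where q: "q = (fm, fp)" "(fm, fp) \<in> eigenspace_DA m A z"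
      by (cases q) auto
    obtain c where "fm 0 $1 = c * fm0 0 $1" "fp 0 $1 = c * fp0 0 $1"
      using proportional_or_coeffs_vanish[OF eigenspace_DA_first_coords[OF p0(1) k, folded s_def]
          eigenspace_DA_first_coords[OF q(2) k, folded s_def]
          eigenspace_DA_first_coords_nonzero[OF p0 k]] coeffs
      by blast
    then show "\<exists>c. q = scaleP c (fm0, fp0)"
      using eigenspace_DA_proportional[OF q(2) p0(1) k] q(1) by blast
  qed
qed

text \<open>For \<open>A = diag(\<alpha>, -4/\<alpha>)\<close> with \<open>\<alpha> (z + m) + 2k = 0\<close> the jump condition
  splits into one condition on each side, which the decaying solutions satisfy automatically.\<close>

lemma exceptional_jump_cond_decouples:
  fixes \<alpha> k s :: complex
  assumes "\<alpha> \<noteq> 0" "s \<noteq> 0" "\<alpha> * s + 2 * k = 0"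
  shows "- k * u$1 + \<i> * s * u$2 = 0 \<Longrightarrow> jump_cond (diag2 \<alpha> (- 4 / \<alpha>)) u 0"
    and "k * w$1 + \<i> * s * w$2 = 0 \<Longrightarrow> jump_cond (diag2 \<alpha> (- 4 / \<alpha>)) 0 w"
proof -
  have ii: "\<i> * \<i> = -1" by simp
  assume c: "- k * u$1 + \<i> * s * u$2 = 0"
  have "s * (2 * \<i> * u$2 + \<alpha> * u$1) = 0" "s * (2 * \<i> * \<alpha> * u$1 - 4 * u$2) = 0"
    using c assms(3) ii by algebra+
  then have "2 * \<i> * u$2 + \<alpha> * u$1 = 0" "2 * \<i> * \<alpha> * u$1 - 4 * u$2 = 0"
    using assms(2) by simp_all
  then have "2 * \<i> * u$2 + \<alpha> * u$1 = 0" "2 * \<i> * u$1 + (- 4 / \<alpha>) * u$2 = 0"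
    using assms(1) by (simp_all add: field_simps)
  then show "jump_cond (diag2 \<alpha> (- 4 / \<alpha>)) u 0"
    unfolding jump_cond_iff by (simp add: algebra_simps)
next
  have ii: "\<i> * \<i> = -1" by simp
  assume c: "k * w$1 + \<i> * s * w$2 = 0"
  have "s * (2 * \<i> * w$2 - \<alpha> * w$1) = 0" "s * (2 * \<i> * \<alpha> * w$1 + 4 * w$2) = 0"
    using c assms(3) ii by algebra+
  then have "2 * \<i> * w$2 - \<alpha> * w$1 = 0" "2 * \<i> * \<alpha> * w$1 + 4 * w$2 = 0"
    using assms(2) by simp_all
  then have "2 * \<i> * w$2 - \<alpha> * w$1 = 0" "2 * \<i> * w$1 - (- 4 / \<alpha>) * w$2 = 0"
    using assms(1) by (simp_all add: field_simps)
  then show "jump_cond (diag2 \<alpha> (- 4 / \<alpha>)) 0 w"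
    unfolding jump_cond_iff by (simp add: algebra_simps)
qed

lemma exceptional_decay_relation:
  fixes \<alpha> k :: complex
  assumes "is_eigenvalue_DA m (diag2 \<alpha> (- 4 / \<alpha>)) z" "\<alpha> \<noteq> 0"
    and k: "k\<^sup>2 = (of_real m)\<^sup>2 - z\<^sup>2" "Re k \<ge> 0" "k \<noteq> 0"
  shows "\<alpha> * (z + of_real m) + 2 * k = 0"
proof (rule ccontr)
  define s where "s = z + of_real m"
  assume "\<alpha> * (z + of_real m) + 2 * k \<noteq> 0"
  then have Q: "\<alpha> * s + 2 * k \<noteq> 0" by (simp add: s_def)
  obtain fm fp where p: "(fm, fp) \<in> eigenspace_DA m (diag2 \<alpha> (- 4 / \<alpha>)) z" "(fm, fp) \<noteq> 0"
    using assms(1) by (auto simp: is_eigenvalue_DA_def)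
  note eqs = eigenspace_DA_first_coords[OF p(1) k, folded s_def]
  have "(fp 0 $1 + fm 0 $1) * (\<alpha> * s + 2 * k) = 0"
    using eqs(1) by simp algebra
  moreover have "(fp 0 $1 - fm 0 $1) * ((2 * \<i> / \<alpha>) * (\<alpha> * s + 2 * k)) = 0"
    using eqs(2) assms(2) by (simp add: field_simps)
  ultimately have "fm 0 $1 = 0" "fp 0 $1 = 0"
    using Q assms(2) by (simp_all add: eq_neg_iff_add_eq_0)
  then show False
    using eigenspace_DA_first_coords_nonzero[OF p k] by simp
qed

lemma exceptional_eigenspace_halves:
  fixes m :: real and z \<alpha> k :: complex
  defines "E \<equiv> eigenspace_DA m (diag2 \<alpha> (- 4 / \<alpha>)) z"
  assumes "(fm, fp) \<in> E" "\<alpha> \<noteq> 0"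
    and k: "k\<^sup>2 = (of_real m)\<^sup>2 - z\<^sup>2" "Re k \<ge> 0" "k \<noteq> 0"
    and rel: "\<alpha> * (z + of_real m) + 2 * k = 0"
  shows "(fm, \<lambda>_. 0) \<in> E" "(\<lambda>_. 0, reflect fm) \<in> E" "(\<lambda>_. 0, fp) \<in> E" "(reflect fp, \<lambda>_. 0) \<in> E"
proof -
  have neg: "eigenfun_neg m z fm" and pos: "eigenfun_pos m z fp"
    using assms(2) by (simp_all add: E_def eigenspace_DA_iff)
  note decouple = exceptional_jump_cond_decouples[OF assms(3) decay_rate_shift_nonzero[OF k(1,3)] rel]
  have "- k * fm 0 $1 + \<i> * (z + of_real m) * fm 0 $2 = 0"
    by (rule eigenfun_neg_decay(1)[OF neg k])
  then have "jump_cond (diag2 \<alpha> (- 4 / \<alpha>)) (fm 0) 0"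
    "jump_cond (diag2 \<alpha> (- 4 / \<alpha>)) 0 (reflect fm 0)"
    by (intro decouple; simp only: reflect_nth minus_zero; algebra)+
  then show "(fm, \<lambda>_. 0) \<in> E" "(\<lambda>_. 0, reflect fm) \<in> E"
    using neg eigenfun_neg_reflect[OF neg] eigenfun_pos_zero eigenfun_neg_zero
    by (simp_all add: E_def eigenspace_DA_iff)
  have "k * fp 0 $1 + \<i> * (z + of_real m) * fp 0 $2 = 0"
    by (rule eigenfun_pos_decay(1)[OF pos k])
  then have "jump_cond (diag2 \<alpha> (- 4 / \<alpha>)) 0 (fp 0)"
    "jump_cond (diag2 \<alpha> (- 4 / \<alpha>)) (reflect fp 0) 0"
    by (intro decouple; simp only: reflect_nth minus_zero; algebra)+
  then show "(\<lambda>_. 0, fp) \<in> E" "(reflect fp, \<lambda>_. 0) \<in> E"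
    using pos eigenfun_pos_reflect[OF pos] eigenfun_pos_zero eigenfun_neg_zero
    by (simp_all add: E_def eigenspace_DA_iff)
qed

lemma eigenspace_DA_dim_eq_2:
  fixes k :: complex
  assumes "(gm, \<lambda>_. 0) \<in> eigenspace_DA m A z" "(\<lambda>_. 0, gp) \<in> eigenspace_DA m A z"
    and "gm 0 $1 \<noteq> 0" "gp 0 $1 \<noteq> 0"
    and k: "k\<^sup>2 = (of_real m)\<^sup>2 - z\<^sup>2" "Re k \<ge> 0" "k \<noteq> 0"
  shows "vector_space.dim scaleP (eigenspace_DA m A z) = 2"
proof (rule dim_scaleP_eq_2[OF assms(1,2)])
  show "(gm, \<lambda>_. 0) \<noteq> 0"
    using assms(3) by (auto simp: zero_prod_def fun_eq_iff intro!: exI[of _ 0])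
  show "(\<lambda>_. 0, gp) \<noteq> scaleP c (gm, \<lambda>_. 0)" for c
    using assms(4) by (auto simp: scaleP_def fun_eq_iff)
  fix r assume "r \<in> eigenspace_DA m A z"
  then obtain fm fp where r: "r = (fm, fp)" "(fm, fp) \<in> eigenspace_DA m A z"
    by (cases r) auto
  have halves: "eigenfun_neg m z gm" "eigenfun_pos m z gp" "eigenfun_neg m z fm" "eigenfun_pos m z fp"
    using assms(1,2) r(2) by (simp_all add: eigenspace_DA_iff)
  define a b where "a = fm 0 $1 / gm 0 $1" and "b = fp 0 $1 / gp 0 $1"
  have "fm = (\<lambda>x. a *s gm x)"
    using eigenfun_neg_proportional[OF halves(3,1) k, of a] assms(3) by (simp add: a_def)
  moreover have "fp = (\<lambda>x. b *s gp x)"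
    using eigenfun_pos_proportional[OF halves(4,2) k, of b] assms(4) by (simp add: b_def)
  ultimately have "r = scaleP a (gm, \<lambda>_. 0) + scaleP b (\<lambda>_. 0, gp)"
    using r(1) by (simp add: scaleP_def zero_fun_def)
  then show "\<exists>a b. r = scaleP a (gm, \<lambda>_. 0) + scaleP b (\<lambda>_. 0, gp)" by blast
qed

lemma geom_mult_DA_exceptional:
  assumes "is_eigenvalue_DA m (diag2 \<alpha> (- 4 / \<alpha>)) z" "\<alpha> \<noteq> 0"
  shows "geom_mult_DA m (diag2 \<alpha> (- 4 / \<alpha>)) z = 2"
proof -
  obtain k where k: "k\<^sup>2 = (of_real m)\<^sup>2 - z\<^sup>2" "Re k \<ge> 0" "k \<noteq> 0"
    using assms(1) by (rule eigenvalue_DA_decay_rate)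
  note halves = exceptional_eigenspace_halves[OF _ assms(2) k exceptional_decay_relation[OF assms k]]
  obtain fm fp where p: "(fm, fp) \<in> eigenspace_DA m (diag2 \<alpha> (- 4 / \<alpha>)) z" "(fm, fp) \<noteq> 0"
    using assms(1) by (auto simp: is_eigenvalue_DA_def)
  consider "fm 0 $1 \<noteq> 0" | "fp 0 $1 \<noteq> 0"
    using eigenspace_DA_first_coords_nonzero[OF p k] by blast
  then show ?thesis
  proof cases
    case 1
    then show ?thesis
      using eigenspace_DA_dim_eq_2[OF halves(1,2)[OF p(1)] _ _ k] by (simp add: geom_mult_DA_def)
  next
    case 2
    then show ?thesis
      using eigenspace_DA_dim_eq_2[OF halves(4,3)[OF p(1)] _ _ k] by (simp add: geom_mult_DA_def)
  qed
qed

text \<open>Squaring \<open>\<alpha> (z + m) = -2k\<close> gives \<open>\<alpha>\<^sup>2 (z + m) = 4 (m - z)\<close>, which is linear in \<open>z\<close>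
  with leading coefficient \<open>\<alpha>\<^sup>2 + 4 \<noteq> 0\<close> (otherwise \<open>8 m = 0\<close>).\<close>

lemma exceptional_eigenvalue_unique:
  assumes "m \<noteq> 0" "\<alpha> \<noteq> 0"
    and "is_eigenvalue_DA m (diag2 \<alpha> (- 4 / \<alpha>)) z" "is_eigenvalue_DA m (diag2 \<alpha> (- 4 / \<alpha>)) w"
  shows "w = z"
proof -
  have linear: "\<alpha>\<^sup>2 * (x + of_real m) = 4 * (of_real m - x)"
    if ev: "is_eigenvalue_DA m (diag2 \<alpha> (- 4 / \<alpha>)) x" for x
  proof -
    obtain k where k: "k\<^sup>2 = (of_real m)\<^sup>2 - x\<^sup>2" "Re k \<ge> 0" "k \<noteq> 0"
      using ev by (rule eigenvalue_DA_decay_rate)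
    have "(x + of_real m) * (\<alpha>\<^sup>2 * (x + of_real m) - 4 * (of_real m - x)) = 0"
      using exceptional_decay_relation[OF ev assms(2) k] k(1) by algebra
    then show ?thesis
      using decay_rate_shift_nonzero[OF k(1,3)] by simp
  qed
  have "(\<alpha>\<^sup>2 + 4) * (w - z) = 0" "(\<alpha>\<^sup>2 + 4) * (z + of_real m) = 8 * of_real m"
    using linear[OF assms(3)] linear[OF assms(4)] by algebra+
  then show ?thesis
    using assms(1) by auto
qed

theorem corollary3p5:
  fixes m :: real and A :: "complex^2^2" and z :: complex
  assumes "m \<noteq> 0"
    and "is_eigenvalue_DA m A z"
  shows "(\<not> (\<exists>\<alpha>. \<alpha> \<noteq> 0 \<and> A = diag2 \<alpha> (- 4 / \<alpha>)) \<longrightarrow> geom_mult_DA m A z = 1) \<and>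
         ((\<exists>\<alpha>. \<alpha> \<noteq> 0 \<and> A = diag2 \<alpha> (- 4 / \<alpha>)) \<longrightarrow>
            geom_mult_DA m A z = 2 \<and> (\<forall>w. is_eigenvalue_DA m A w \<longrightarrow> w = z))"
proof (intro conjI impI)
  assume "\<not> (\<exists>\<alpha>. \<alpha> \<noteq> 0 \<and> A = diag2 \<alpha> (- 4 / \<alpha>))"
  then show "geom_mult_DA m A z = 1" by (rule geom_mult_DA_eq_1[OF assms(2)])
next
  assume "\<exists>\<alpha>. \<alpha> \<noteq> 0 \<and> A = diag2 \<alpha> (- 4 / \<alpha>)"
  then obtain \<alpha> where "\<alpha> \<noteq> 0" "A = diag2 \<alpha> (- 4 / \<alpha>)" by blast
  then show "geom_mult_DA m A z = 2" "\<forall>w. is_eigenvalue_DA m A w \<longrightarrow> w = z"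
    using geom_mult_DA_exceptional exceptional_eigenvalue_unique assms by blast+
qed

end
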